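(* Let $\mathfrak a_{1.3}$ be the Lie algebra of vector fields on $\mathbb R^3_{z_1,z_2,w}$ spanned by \[ P^1=\partial_{z_1},\ D^1=z_1\partial_{z_1}-w\partial_w,\ K=z_1^2\partial_{z_1}+z_1z_2\partial_{z_2}+\big(z_1w+\tfrac16z_2^{3}\big)\partial_w,\ D^2=z_2\partial_{z_2}+3w\partial_w, \] \[ P^2=\partial_{z_2},\ H=z_1\partial_{z_2}+\tfrac12z_2^{2}\partial_w,\ R(\alpha)=\alpha(z_1)z_2\partial_w,\ Z(\sigma)=\sigma(z_1)\partial_w \] ($\alpha,\sigma$ arbitrary smooth functions of $z_1$). Then any one-dimensional subalgebra of $\mathfrak a_{1.3}$ that is appropriate for Lie reduction of the equation $w_{122}+w_{22}w_{222}=0$ is $G_{1.3}$-equivalent to a subalgebra contained in the span $\mathfrak u:=\langle P^1,D^1,K,D^2,P^2,H\rangle$ or in the span $\langle P^2,R(\alpha)\rangle$ for some smooth function $\alpha$ of $z_1$.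
   Context: A one-dimensional subalgebra $\langle Q\rangle$ is appropriate for Lie reduction if the projection of $Q$ to the space of independent variables $(z_1,z_2)$ is not identically zero. $G_{1.3}$ is the point-symmetry pseudogroup of $w_{122}+w_{22}w_{222}=0$, consisting of the transformations $\tilde z_1=\frac{c_1z_1+c_2}{c_3z_1+c_4}$, $\tilde z_2=\frac{z_2+c_5z_1+c_6}{c_3z_1+c_4}$, $\tilde w=\frac{w}{\Delta(c_3z_1+c_4)}-\frac{c_3}{\Delta(c_3z_1+c_4)^2}\frac{z_2^3}6-\frac{c_3c_6-c_4c_5}{\Delta(c_3z_1+c_4)^2}\frac{z_2^2}2+W^1(z_1)z_2+W^0(z_1)$, with constants $c_i$, $\Delta:=c_1c_4-c_2c_3\ne0$, and smooth functions $W^0,W^1$. Two subalgebras are $G_{1.3}$-equivalent if one is the pushforward of the other by an element of $G_{1.3}$. *)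

theory Defs
  imports "HOL-Analysis.Analysis"
begin

text \<open>Points of R^3 with coordinates (z1, z2, w); vector fields are maps R^3 -> R^3
  giving the components (coefficient of d/dz1, of d/dz2, of d/dw).\<close>

type_synonym pt = "real \<times> real \<times> real"
type_synonym vfield = "pt \<Rightarrow> pt"

definition smooth_on :: "real set \<Rightarrow> (real \<Rightarrow> real) \<Rightarrow> bool" where
  "smooth_on S f \<longleftrightarrow> (\<forall>n. \<forall>x\<in>S. ((deriv ^^ n) f) field_differentiable (at x))"

definition vP1 :: vfield where "vP1 = (\<lambda>(z1,z2,w). (1, 0, 0))"
definition vD1 :: vfield where "vD1 = (\<lambda>(z1,z2,w). (z1, 0, - w))"
definition vK :: vfield where
  "vK = (\<lambda>(z1,z2,w). (z1^2, z1 * z2, z1 * w + z2^3 / 6))"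
definition vD2 :: vfield where "vD2 = (\<lambda>(z1,z2,w). (0, z2, 3 * w))"
definition vP2 :: vfield where "vP2 = (\<lambda>(z1,z2,w). (0, 1, 0))"
definition vH :: vfield where "vH = (\<lambda>(z1,z2,w). (0, z1, z2^2 / 2))"
definition vR :: "(real \<Rightarrow> real) \<Rightarrow> vfield" where
  "vR \<alpha> = (\<lambda>(z1,z2,w). (0, 0, \<alpha> z1 * z2))"
definition vZ :: "(real \<Rightarrow> real) \<Rightarrow> vfield" where
  "vZ \<sigma> = (\<lambda>(z1,z2,w). (0, 0, \<sigma> z1))"

definition u_comb :: "real \<Rightarrow> real \<Rightarrow> real \<Rightarrow> real \<Rightarrow> real \<Rightarrow> real \<Rightarrow> vfield" where
  "u_comb a1 b1 k b2 a2 h = (\<lambda>x. a1 *\<^sub>R vP1 x + b1 *\<^sub>R vD1 x + k *\<^sub>R vK x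
      + b2 *\<^sub>R vD2 x + a2 *\<^sub>R vP2 x + h *\<^sub>R vH x)"

text \<open>Membership in the span a_{1.3} (finite linear combinations; sums of R(alpha_i),
  resp. Z(sigma_i), are again of the form R(alpha), resp. Z(sigma)).\<close>
definition in_a13 :: "vfield \<Rightarrow> bool" where
  "in_a13 Q \<longleftrightarrow> (\<exists>a1 b1 k b2 a2 h \<alpha> \<sigma>. smooth_on UNIV \<alpha> \<and> smooth_on UNIV \<sigma> \<and>
      Q = (\<lambda>x. u_comb a1 b1 k b2 a2 h x + vR \<alpha> x + vZ \<sigma> x))"

definition appropriate :: "vfield \<Rightarrow> bool" where
  "appropriate Q \<longleftrightarrow> (\<exists>x. fst (Q x) \<noteq> 0 \<or> fst (snd (Q x)) \<noteq> 0)"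

definition g13 :: "real \<Rightarrow> real \<Rightarrow> real \<Rightarrow> real \<Rightarrow> real \<Rightarrow> real \<Rightarrow>
    (real \<Rightarrow> real) \<Rightarrow> (real \<Rightarrow> real) \<Rightarrow> pt \<Rightarrow> pt" where
  "g13 c1 c2 c3 c4 c5 c6 W0 W1 = (\<lambda>(z1,z2,w).
     (let \<Delta> = c1 * c4 - c2 * c3; d = c3 * z1 + c4 in
      ((c1 * z1 + c2) / d,
       (z2 + c5 * z1 + c6) / d,
       w / (\<Delta> * d) - c3 / (\<Delta> * d^2) * (z2^3 / 6)
         - (c3 * c6 - c4 * c5) / (\<Delta> * d^2) * (z2^2 / 2) + W1 z1 * z2 + W0 z1)))"

definition pushes :: "(pt \<Rightarrow> pt) \<Rightarrow> pt set \<Rightarrow> vfield \<Rightarrow> vfield \<Rightarrow> bool" where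
  "pushes \<Phi> U Q Q' \<longleftrightarrow>
     (\<forall>x\<in>U. \<exists>D. (\<Phi> has_derivative D) (at x) \<and> D (Q x) = Q' (\<Phi> x))"

end

theory Submission
  imports Defs
begin

text \<open>The \<open>z1\<close>-component of a field in \<open>a_{1.3}\<close> is the quadratic
  \<open>\<tau> = a1 + b1 z1 + k z1^2\<close>. A gauge \<open>w \<mapsto> w + W1(z1) z2 + W0(z1)\<close> from \<open>G_{1.3}\<close>
  removes the part \<open>R(\<alpha>) + Z(\<sigma>)\<close> as soon as \<open>W1\<close> and \<open>W0\<close> solve two linear
  first-order ODEs with leading coefficient \<open>\<tau>\<close>. If \<open>\<tau> \<noteq> 0\<close> somewhere, these
  ODEs have smooth solutions near such a point (integrating factor), and \<open>Q\<close> becomes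
  an element of \<open>u\<close>. If \<open>\<tau> = 0\<close>, appropriateness forces the \<open>z2\<close>-component
  \<open>b2 z2 + a2 + h z1\<close> to be nonzero: for \<open>b2 \<noteq> 0\<close> the ODEs become algebraic; for
  \<open>b2 = 0\<close>, \<open>h \<noteq> 0\<close> the projective change \<open>z1 \<mapsto> -1 / (h z1 + a2)\<close> straightens
  \<open>Q\<close> to \<open>P2 + R(\<alpha>')\<close>; for \<open>b2 = h = 0\<close> a gauge alone leaves \<open>a2 P2 + R(\<alpha>)\<close>.\<close>

text \<open>Note the shift: \<open>Ck_on n\<close> asks for \<open>n + 1\<close> derivatives.\<close>
definition Ck_on :: "nat \<Rightarrow> real set \<Rightarrow> (real \<Rightarrow> real) \<Rightarrow> bool" where
  "Ck_on n S f \<longleftrightarrow> (\<forall>m\<le>n. \<forall>x\<in>S. ((deriv ^^ m) f) field_differentiable (at x))"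

lemma smooth_on_iff_Ck_on: "smooth_on S f \<longleftrightarrow> (\<forall>n. Ck_on n S f)"
  unfolding smooth_on_def Ck_on_def by auto

lemma Ck_on_0: "Ck_on 0 S f \<longleftrightarrow> (\<forall>x\<in>S. f field_differentiable (at x))"
  unfolding Ck_on_def by auto

lemma Ck_on_Suc:
  "Ck_on (Suc n) S f \<longleftrightarrow> (\<forall>x\<in>S. f field_differentiable (at x)) \<and> Ck_on n S (deriv f)"
  unfolding Ck_on_def less_Suc_eq_le[symmetric] All_less_Suc2
  by (simp only: funpow_Suc_right comp_def funpow_0)

lemma Ck_on_has_derivative:
  "Ck_on n S f \<Longrightarrow> x \<in> S \<Longrightarrow> (f has_real_derivative deriv f x) (at x)"
  by (cases n) (auto simp: Ck_on_0 Ck_on_Suc DERIV_deriv_iff_field_differentiable)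

lemma Ck_on_Suc_imp_Ck_on: "Ck_on (Suc n) S f \<Longrightarrow> Ck_on n S f"
  unfolding Ck_on_def by auto

lemma Ck_on_subset: "Ck_on n S f \<Longrightarrow> T \<subseteq> S \<Longrightarrow> Ck_on n T f"
  unfolding Ck_on_def by blast

lemma Ck_on_cong:
  assumes "open S" "\<And>x. x \<in> S \<Longrightarrow> f x = g x" "Ck_on n S f"
  shows "Ck_on n S g"
  unfolding Ck_on_def
proof safe
  fix m x assume "m \<le> n" "x \<in> S"
  then obtain D where D: "((deriv ^^ m) f has_field_derivative D) (at x)"
    using assms(3) by (auto simp: Ck_on_def field_differentiable_def)
  have "(deriv ^^ m) f y = (deriv ^^ m) g y" if "y \<in> S" for y
    using eventually_nhds_in_open[OF assms(1) that]
    by (intro higher_deriv_cong_ev) (auto elim!: eventually_mono simp: assms(2))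
  then have "((deriv ^^ m) g has_field_derivative D) (at x)"
    by (rule has_field_derivative_transform_within_open[OF D assms(1) \<open>x \<in> S\<close>])
  then show "(deriv ^^ m) g field_differentiable at x"
    by (auto simp: field_differentiable_def)
qed

lemma Ck_on_SucI:
  assumes "open S" "\<And>x. x \<in> S \<Longrightarrow> (f has_real_derivative f' x) (at x)" "Ck_on n S f'"
  shows "Ck_on (Suc n) S f"
proof -
  have "Ck_on n S (deriv f)"
    using assms by (intro Ck_on_cong[OF assms(1) _ assms(3)]) (metis DERIV_imp_deriv)
  with assms(2) show ?thesis
    by (auto simp: Ck_on_Suc field_differentiable_def)
qed

lemma Ck_on_const: "open S \<Longrightarrow> Ck_on n S (\<lambda>x. c)"
  by (induction n arbitrary: c)
     (auto simp: Ck_on_0 intro!: Ck_on_SucI[where f' = "\<lambda>x. 0"] derivative_eq_intros)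

lemma Ck_on_id: "open S \<Longrightarrow> Ck_on n S (\<lambda>x. x)"
  by (cases n)
     (auto simp: Ck_on_0 intro!: Ck_on_SucI[where f' = "\<lambda>x. 1"] Ck_on_const derivative_eq_intros)

lemma Ck_on_exp: "Ck_on n UNIV exp"
  by (induction n)
     (auto simp: Ck_on_0 field_differentiable_def intro!: Ck_on_SucI[where f' = exp] DERIV_exp)

lemma Ck_on_add:
  "open S \<Longrightarrow> Ck_on n S f \<Longrightarrow> Ck_on n S g \<Longrightarrow> Ck_on n S (\<lambda>x. f x + g x)"
proof (induction n arbitrary: f g)
  case 0 then show ?case by (auto simp: Ck_on_0 intro: field_differentiable_add)
next
  case (Suc n)
  show ?case
  proof (rule Ck_on_SucI[where f' = "\<lambda>x. deriv f x + deriv g x"])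
    show "Ck_on n S (\<lambda>x. deriv f x + deriv g x)"
      using Suc by (simp add: Ck_on_Suc)
  qed (use Suc in \<open>auto intro!: derivative_eq_intros Ck_on_has_derivative\<close>)
qed

lemma Ck_on_mult:
  "open S \<Longrightarrow> Ck_on n S f \<Longrightarrow> Ck_on n S g \<Longrightarrow> Ck_on n S (\<lambda>x. f x * g x)"
proof (induction n arbitrary: f g)
  case 0 then show ?case by (auto simp: Ck_on_0 intro: field_differentiable_mult)
next
  case (Suc n)
  have f: "Ck_on n S f" "Ck_on n S (deriv f)" and g: "Ck_on n S g" "Ck_on n S (deriv g)"
    using Ck_on_Suc_imp_Ck_on[OF Suc.prems(2)] Ck_on_Suc_imp_Ck_on[OF Suc.prems(3)] Suc.prems
    by (simp_all add: Ck_on_Suc)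
  show ?case
  proof (rule Ck_on_SucI[where f' = "\<lambda>x. f x * deriv g x + deriv f x * g x"])
    show "Ck_on n S (\<lambda>x. f x * deriv g x + deriv f x * g x)"
      using Suc.prems(1) f g by (intro Ck_on_add Suc.IH)
  next
    fix x assume "x \<in> S"
    then show "((\<lambda>x. f x * g x) has_real_derivative f x * deriv g x + deriv f x * g x) (at x)"
      using Ck_on_has_derivative[OF Suc.prems(2)] Ck_on_has_derivative[OF Suc.prems(3)]
      by (auto intro!: derivative_eq_intros)
  qed (fact Suc.prems(1))
qed

lemma Ck_on_inverse:
  assumes "open S" "\<And>x. x \<in> S \<Longrightarrow> g x \<noteq> 0"
  shows "Ck_on n S g \<Longrightarrow> Ck_on n S (\<lambda>x. inverse (g x))"
proof (induction n)
  case 0 then show ?case by (auto simp: Ck_on_0 assms(2) intro: field_differentiable_inverse)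
next
  case (Suc n)
  have g: "Ck_on n S g" "Ck_on n S (deriv g)"
    using Ck_on_Suc_imp_Ck_on[OF Suc.prems] Suc.prems by (simp_all add: Ck_on_Suc)
  let ?g' = "\<lambda>x. (- 1) * deriv g x * (inverse (g x) * inverse (g x))"
  show ?case
  proof (rule Ck_on_SucI[where f' = ?g'])
    show "Ck_on n S ?g'"
      using Ck_on_const[OF assms(1)] g Suc.IH[OF g(1)] by (intro Ck_on_mult[OF assms(1)])
  next
    fix x assume "x \<in> S"
    then have "((\<lambda>x. inverse (g x)) has_real_derivative
        - (deriv g x * inverse (g x ^ Suc (Suc 0)))) (at x)"
      by (intro DERIV_inverse_fun Ck_on_has_derivative[OF Suc.prems] assms(2))
    then show "((\<lambda>x. inverse (g x)) has_real_derivative ?g' x) (at x)"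
      by (simp add: power2_eq_square)
  qed (fact assms(1))
qed

lemma Ck_on_compose:
  "open S \<Longrightarrow> Ck_on n UNIV f \<Longrightarrow> Ck_on n S g \<Longrightarrow> Ck_on n S (\<lambda>x. f (g x))"
proof (induction n arbitrary: f g)
  case 0
  then show ?case
    by (auto simp: Ck_on_0 intro: field_differentiable_compose[unfolded comp_def])
next
  case (Suc n)
  have f: "Ck_on n UNIV (deriv f)" and g: "Ck_on n S g" "Ck_on n S (deriv g)"
    using Ck_on_Suc_imp_Ck_on[OF Suc.prems(3)] Suc.prems by (simp_all add: Ck_on_Suc)
  show ?case
  proof (rule Ck_on_SucI[where f' = "\<lambda>x. deriv f (g x) * deriv g x"])
    show "Ck_on n S (\<lambda>x. deriv f (g x) * deriv g x)"
      using Ck_on_mult[OF Suc.prems(1) Suc.IH[OF Suc.prems(1) f g(1)] g(2)] .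
  next
    fix x assume "x \<in> S"
    then show "((\<lambda>x. f (g x)) has_real_derivative deriv f (g x) * deriv g x) (at x)"
      by (intro DERIV_chain2 Ck_on_has_derivative[OF Suc.prems(2) UNIV_I]
          Ck_on_has_derivative[OF Suc.prems(3)])
  qed (fact Suc.prems(1))
qed

lemma smooth_on_Ck_on: "smooth_on S f \<Longrightarrow> Ck_on n S f"
  by (simp add: smooth_on_iff_Ck_on)

lemma smooth_on_has_derivative:
  "smooth_on S f \<Longrightarrow> x \<in> S \<Longrightarrow> (f has_real_derivative deriv f x) (at x)"
  by (rule Ck_on_has_derivative[OF smooth_on_Ck_on])

lemma smooth_on_imp_continuous_on: "smooth_on S f \<Longrightarrow> continuous_on S f"
  by (meson DERIV_isCont continuous_at_imp_continuous_on smooth_on_has_derivative)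

lemma smooth_on_subset: "smooth_on S f \<Longrightarrow> T \<subseteq> S \<Longrightarrow> smooth_on T f"
  unfolding smooth_on_iff_Ck_on using Ck_on_subset by blast

lemma smooth_on_antiderivative:
  assumes "open S" "\<And>x. x \<in> S \<Longrightarrow> (F has_real_derivative f x) (at x)" "smooth_on S f"
  shows "smooth_on S F"
  unfolding smooth_on_iff_Ck_on
proof
  fix n
  show "Ck_on n S F"
    using Ck_on_SucI[OF assms(1,2) smooth_on_Ck_on[OF assms(3)]] by (rule Ck_on_Suc_imp_Ck_on)
qed

lemma smooth_on_const: "open S \<Longrightarrow> smooth_on S (\<lambda>x. c)"
  by (simp add: smooth_on_iff_Ck_on Ck_on_const)

lemma smooth_on_id: "open S \<Longrightarrow> smooth_on S (\<lambda>x. x)"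
  by (simp add: smooth_on_iff_Ck_on Ck_on_id)

lemma smooth_on_exp: "smooth_on UNIV exp"
  by (simp add: smooth_on_iff_Ck_on Ck_on_exp)

lemma smooth_on_add:
  "open S \<Longrightarrow> smooth_on S f \<Longrightarrow> smooth_on S g \<Longrightarrow> smooth_on S (\<lambda>x. f x + g x)"
  by (simp add: smooth_on_iff_Ck_on Ck_on_add)

lemma smooth_on_mult:
  "open S \<Longrightarrow> smooth_on S f \<Longrightarrow> smooth_on S g \<Longrightarrow> smooth_on S (\<lambda>x. f x * g x)"
  by (simp add: smooth_on_iff_Ck_on Ck_on_mult)

lemma smooth_on_inverse:
  "open S \<Longrightarrow> smooth_on S g \<Longrightarrow> (\<And>x. x \<in> S \<Longrightarrow> g x \<noteq> 0) \<Longrightarrow> smooth_on S (\<lambda>x. inverse (g x))"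
  by (simp add: smooth_on_iff_Ck_on Ck_on_inverse)

lemma smooth_on_compose:
  "open S \<Longrightarrow> smooth_on UNIV f \<Longrightarrow> smooth_on S g \<Longrightarrow> smooth_on S (\<lambda>x. f (g x))"
  by (simp add: smooth_on_iff_Ck_on Ck_on_compose)

lemma smooth_on_minus:
  assumes "open S" "smooth_on S f"
  shows "smooth_on S (\<lambda>x. - f x)"
  using smooth_on_mult[OF assms(1) smooth_on_const[OF assms(1)] assms(2), of "- 1"] by simp

lemma smooth_on_diff:
  "open S \<Longrightarrow> smooth_on S f \<Longrightarrow> smooth_on S g \<Longrightarrow> smooth_on S (\<lambda>x. f x - g x)"
  using smooth_on_add[OF _ _ smooth_on_minus, of S f g] by simp

lemma smooth_on_divide:
  "open S \<Longrightarrow> smooth_on S f \<Longrightarrow> smooth_on S g \<Longrightarrow> (\<And>x. x \<in> S \<Longrightarrow> g x \<noteq> 0)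
    \<Longrightarrow> smooth_on S (\<lambda>x. f x / g x)"
  using smooth_on_mult[OF _ _ smooth_on_inverse, of S f g] by (simp add: divide_inverse)

lemma smooth_antiderivative_local:
  assumes "open T" "z0 \<in> T" "smooth_on T f"
  obtains a b F where "a < z0" "z0 < b" "{a<..<b} \<subseteq> T" "smooth_on {a<..<b} F"
    "\<And>x. x \<in> {a<..<b} \<Longrightarrow> (F has_real_derivative f x) (at x)"
proof -
  obtain e where e: "e > 0" "cball z0 e \<subseteq> T"
    using assms(1,2) open_contains_cball by blast
  define a b where "a = z0 - e" and "b = z0 + e"
  have ab: "{a..b} \<subseteq> T"
    using e(2) by (simp add: a_def b_def cball_eq_atLeastAtMost)
  have cont: "continuous_on {a..b} f"
    using smooth_on_imp_continuous_on[OF assms(3)] ab by (rule continuous_on_subset)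
  define F where "F x = integral {a..x} f" for x
  have F: "(F has_real_derivative f x) (at x)" if "x \<in> {a<..<b}" for x
    using integral_has_real_derivative[OF cont, of x] at_within_Icc_at[of a x b] that
    unfolding F_def by simp
  have "smooth_on {a<..<b} F"
    using ab by (intro smooth_on_antiderivative[OF _ F smooth_on_subset[OF assms(3)]]) auto
  moreover have "a < z0" "z0 < b"
    using e(1) by (simp_all add: a_def b_def)
  moreover have "{a<..<b} \<subseteq> T"
    using ab by auto
  ultimately show thesis
    using that F by blast
qed

text \<open>Integrating factor: with \<open>P' = p\<close> and \<open>R' = exp (- P) * q\<close>, the function
  \<open>R * exp P\<close> solves \<open>y' = p * y + q\<close>.\<close>
lemma linear_ode_local_solution:
  assumes "open T" "z0 \<in> T" "smooth_on T p" "smooth_on T q"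
  obtains a b y where "a < z0" "z0 < b" "{a<..<b} \<subseteq> T" "smooth_on {a<..<b} y"
    "\<And>x. x \<in> {a<..<b} \<Longrightarrow> (y has_real_derivative p x * y x + q x) (at x)"
proof -
  obtain a b P where ab: "a < z0" "z0 < b" "{a<..<b} \<subseteq> T" and sP: "smooth_on {a<..<b} P"
    and P: "\<And>x. x \<in> {a<..<b} \<Longrightarrow> (P has_real_derivative p x) (at x)"
    using smooth_antiderivative_local[OF assms(1,2,3)] by blast
  have z0: "z0 \<in> {a<..<b}" using ab by simp
  have "smooth_on {a<..<b} (\<lambda>x. exp (- P x) * q x)"
    using ab(3) by (intro smooth_on_mult smooth_on_compose[OF _ smooth_on_exp] smooth_on_minus sP
        smooth_on_subset[OF assms(4)]) auto
  then obtain a' b' R where ab': "a' < z0" "z0 < b'" "{a'<..<b'} \<subseteq> {a<..<b}"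
    and sR: "smooth_on {a'<..<b'} R"
    and R: "\<And>x. x \<in> {a'<..<b'} \<Longrightarrow> (R has_real_derivative exp (- P x) * q x) (at x)"
    by (rule smooth_antiderivative_local[OF open_greaterThanLessThan z0]) blast
  define y where "y x = R x * exp (P x)" for x
  show thesis
  proof (rule that[OF ab'(1,2)])
    show "{a'<..<b'} \<subseteq> T" using ab(3) ab'(3) by blast
    show "smooth_on {a'<..<b'} y"
      unfolding y_def using ab'(3)
      by (intro smooth_on_mult smooth_on_compose[OF _ smooth_on_exp] sR smooth_on_subset[OF sP]) auto
  next
    fix x assume "x \<in> {a'<..<b'}"
    then have "(y has_real_derivative exp (- P x) * q x * exp (P x) + R x * (exp (P x) * p x)) (at x)"
      unfolding y_def using R P ab'(3) by (auto intro!: derivative_eq_intros)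
    then show "(y has_real_derivative p x * y x + q x) (at x)"
      by (simp add: y_def exp_minus field_simps)
  qed
qed

lemma u_comb_eval:
  "u_comb a1 b1 k b2 a2 h (z1, z2, w) = (a1 + b1 * z1 + k * z1^2, k * z1 * z2 + b2 * z2 + a2 + h * z1,
     (3 * b2 - b1 + k * z1) * w + k * z2^3 / 6 + h * z2^2 / 2)"
  by (simp add: u_comb_def vP1_def vD1_def vK_def vD2_def vP2_def vH_def algebra_simps)

lemma g13_gauge: "g13 1 0 0 1 0 0 W0 W1 = (\<lambda>(z1, z2, w). (z1, z2, w + W1 z1 * z2 + W0 z1))"
  by (simp add: g13_def)

lemma gauge_has_derivative:
  assumes "(W1 has_real_derivative d1) (at z1)" "(W0 has_real_derivative d0) (at z1)"
  shows "(g13 1 0 0 1 0 0 W0 W1 has_derivative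
      (\<lambda>(u1, u2, v). (u1, u2, v + (d1 * z2 + d0) * u1 + W1 z1 * u2))) (at (z1, z2, w))"
proof -
  have W1: "(W1 has_derivative (\<lambda>t. d1 * t)) (at (fst (z1, z2, w)))"
    and W0: "(W0 has_derivative (\<lambda>t. d0 * t)) (at (fst (z1, z2, w)))"
    using assms by (simp_all add: has_field_derivative_def)
  show ?thesis
    unfolding g13_gauge split_beta'
    by (rule derivative_eq_intros has_derivative_compose[of fst, OF _ W1]
        has_derivative_compose[of fst, OF _ W0] | simp)+
       (auto simp: fun_eq_iff algebra_simps)
qed

lemma gauge_pushes_a13:
  assumes "\<And>z. z \<in> I \<Longrightarrow> (W1 has_real_derivative W1' z) (at z)"
    and "\<And>z. z \<in> I \<Longrightarrow> (W0 has_real_derivative W0' z) (at z)"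
    and "\<And>z. z \<in> I \<Longrightarrow> (a1 + b1 * z + k * z^2) * W1' z = (2 * b2 - b1) * W1 z - \<alpha> z + \<beta> z"
    and "\<And>z. z \<in> I \<Longrightarrow>
      (a1 + b1 * z + k * z^2) * W0' z = (3 * b2 - b1 + k * z) * W0 z - (a2 + h * z) * W1 z - \<sigma> z"
  shows "pushes (g13 1 0 0 1 0 0 W0 W1) (I \<times> UNIV)
    (\<lambda>x. u_comb a1 b1 k b2 a2 h x + vR \<alpha> x + vZ \<sigma> x) (\<lambda>x. u_comb a1 b1 k b2 a2 h x + vR \<beta> x)"
  unfolding pushes_def
proof safe
  fix z1 z2 w assume z1: "z1 \<in> I"
  let ?D = "\<lambda>(u1, u2, v). (u1, u2, v + (W1' z1 * z2 + W0' z1) * u1 + W1 z1 * u2)"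
  have "(W1' z1 * z2 + W0' z1) * (a1 + b1 * z1 + k * z1^2)
      = z2 * ((a1 + b1 * z1 + k * z1^2) * W1' z1) + (a1 + b1 * z1 + k * z1^2) * W0' z1"
    by (simp add: algebra_simps)
  also have "\<dots> = z2 * ((2 * b2 - b1) * W1 z1 - \<alpha> z1 + \<beta> z1)
        + ((3 * b2 - b1 + k * z1) * W0 z1 - (a2 + h * z1) * W1 z1 - \<sigma> z1)"
    by (simp only: assms(3,4)[OF z1])
  finally have "?D (u_comb a1 b1 k b2 a2 h (z1, z2, w) + vR \<alpha> (z1, z2, w) + vZ \<sigma> (z1, z2, w)) =
      u_comb a1 b1 k b2 a2 h (g13 1 0 0 1 0 0 W0 W1 (z1, z2, w)) + vR \<beta> (g13 1 0 0 1 0 0 W0 W1 (z1, z2, w))"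
    by (simp add: u_comb_eval g13_gauge vR_def vZ_def, simp add: algebra_simps)
  then show "\<exists>D. (g13 1 0 0 1 0 0 W0 W1 has_derivative D) (at (z1, z2, w)) \<and>
      D (u_comb a1 b1 k b2 a2 h (z1, z2, w) + vR \<alpha> (z1, z2, w) + vZ \<sigma> (z1, z2, w)) =
      u_comb a1 b1 k b2 a2 h (g13 1 0 0 1 0 0 W0 W1 (z1, z2, w)) + vR \<beta> (g13 1 0 0 1 0 0 W0 W1 (z1, z2, w))"
    using gauge_has_derivative[OF assms(1,2)[OF z1]] by blast
qed

lemma g13_inversion:
  assumes "h \<noteq> 0"
  shows "g13 0 (- 1) h a2 0 0 (\<lambda>_. 0) W1 = (\<lambda>(z1, z2, w).
    (- 1 / (h * z1 + a2), z2 / (h * z1 + a2),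
     w / (h * (h * z1 + a2)) - z2^3 / (6 * (h * z1 + a2)^2) + W1 z1 * z2))"
  using assms by (simp add: g13_def Let_def fun_eq_iff)

lemma inversion_has_derivative:
  assumes "h \<noteq> 0" and d: "d = h * z1 + a2" "d \<noteq> 0" and "(W1 has_real_derivative d1) (at z1)"
  shows "(g13 0 (- 1) h a2 0 0 (\<lambda>_. 0) W1 has_derivative
      (\<lambda>(u1, u2, v). (h * u1 / d^2, u2 / d - h * z2 * u1 / d^2,
        v / (h * d) + (W1 z1 - z2^2 / (2 * d^2)) * u2
          + (d1 * z2 - w / d^2 + h * z2^3 / (3 * d^3)) * u1))) (at (z1, z2, w))"
proof -
  have W1: "(W1 has_derivative (\<lambda>t. d1 * t)) (at (fst (z1, z2, w)))"
    using assms(4) by (simp add: has_field_derivative_def)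
  have d': "h * z1 + a2 \<noteq> 0" using d by simp
  show ?thesis
    unfolding g13_inversion[OF assms(1)] split_beta'
    by (rule derivative_eq_intros has_derivative_compose[of fst, OF _ W1] | simp add: d' assms(1))+
       (simp add: fun_eq_iff d(1)[symmetric],
        auto simp: field_simps d(2) assms(1) power2_eq_square power3_eq_cube)
qed

lemma inversion_pushes_a13:
  assumes "h \<noteq> 0" "\<And>z. z \<in> I \<Longrightarrow> h * z + a2 \<noteq> 0"
    and "\<And>z. z \<in> I \<Longrightarrow> (W1 has_real_derivative W1' z) (at z)"
    and "\<And>z. z \<in> I \<Longrightarrow> h * (h * z + a2)^2 * W1 z + \<sigma> z = 0"
  shows "pushes (g13 0 (- 1) h a2 0 0 (\<lambda>_. 0) W1) (I \<times> UNIV)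
    (\<lambda>x. u_comb 0 0 0 0 a2 h x + vR \<alpha> x + vZ \<sigma> x)
    (\<lambda>x. 1 *\<^sub>R vP2 x + vR (\<lambda>t. \<alpha> ((- 1 / t - a2) / h) / h) x)"
  unfolding pushes_def
proof safe
  fix z1 z2 w assume z1: "z1 \<in> I"
  define d where "d = h * z1 + a2"
  have d: "d \<noteq> 0" using assms(2)[OF z1] by (simp add: d_def)
  have d': "a2 + h * z1 = d" and arg: "(d - a2) / h = z1"
    using assms(1) by (simp_all add: d_def)
  have W1: "W1 z1 = - \<sigma> z1 / (h * d^2)"
    using assms(1) assms(4)[OF z1] d by (simp add: d_def field_simps)
  let ?D = "\<lambda>(u1, u2, v). (h * u1 / d^2, u2 / d - h * z2 * u1 / d^2,
        v / (h * d) + (W1 z1 - z2^2 / (2 * d^2)) * u2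
          + (W1' z1 * z2 - w / d^2 + h * z2^3 / (3 * d^3)) * u1)"
  have "?D (u_comb 0 0 0 0 a2 h (z1, z2, w) + vR \<alpha> (z1, z2, w) + vZ \<sigma> (z1, z2, w)) =
      1 *\<^sub>R vP2 (g13 0 (- 1) h a2 0 0 (\<lambda>_. 0) W1 (z1, z2, w))
      + vR (\<lambda>t. \<alpha> ((- 1 / t - a2) / h) / h) (g13 0 (- 1) h a2 0 0 (\<lambda>_. 0) W1 (z1, z2, w))"
    using assms(1) d
    by (simp add: u_comb_eval g13_inversion vP2_def vR_def vZ_def d_def[symmetric] d' arg W1,
        simp add: field_simps power2_eq_square)
  then show "\<exists>D. (g13 0 (- 1) h a2 0 0 (\<lambda>_. 0) W1 has_derivative D) (at (z1, z2, w)) \<and>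
      D (u_comb 0 0 0 0 a2 h (z1, z2, w) + vR \<alpha> (z1, z2, w) + vZ \<sigma> (z1, z2, w)) =
      1 *\<^sub>R vP2 (g13 0 (- 1) h a2 0 0 (\<lambda>_. 0) W1 (z1, z2, w))
      + vR (\<lambda>t. \<alpha> ((- 1 / t - a2) / h) / h) (g13 0 (- 1) h a2 0 0 (\<lambda>_. 0) W1 (z1, z2, w))"
    using inversion_has_derivative[OF assms(1) d_def d assms(3)[OF z1]] by blast
qed

definition equivalent_to_u_or_P2R :: "vfield \<Rightarrow> bool" where
  "equivalent_to_u_or_P2R Q \<longleftrightarrow> (\<exists>I c1 c2 c3 c4 c5 c6 W0 W1.
     open I \<and> is_interval I \<and> I \<noteq> {} \<and>
     c1 * c4 - c2 * c3 \<noteq> 0 \<and> (\<forall>z\<in>I. c3 * z + c4 \<noteq> 0) \<and>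
     smooth_on I W0 \<and> smooth_on I W1 \<and>
     ((\<exists>a1 b1 k b2 a2 h.
         pushes (g13 c1 c2 c3 c4 c5 c6 W0 W1) (I \<times> UNIV) Q (u_comb a1 b1 k b2 a2 h))
      \<or> (\<exists>\<beta> \<alpha>. smooth_on ((\<lambda>z. (c1 * z + c2) / (c3 * z + c4)) ` I) \<alpha> \<and>
         pushes (g13 c1 c2 c3 c4 c5 c6 W0 W1) (I \<times> UNIV) Q
           (\<lambda>x. \<beta> *\<^sub>R vP2 x + vR \<alpha> x))))"

lemma vR_zero: "vR (\<lambda>_. 0) x = 0"
  by (simp add: vR_def split_beta zero_prod_def)

lemma u_comb_P2: "u_comb 0 0 0 0 a2 0 x = a2 *\<^sub>R vP2 x"
  by (simp add: u_comb_def vP1_def vD1_def vK_def vD2_def vP2_def vH_def split_beta zero_prod_def)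

lemma equivalent_to_u_or_P2R_uI:
  assumes "open I" "is_interval I" "I \<noteq> {}" "c1 * c4 - c2 * c3 \<noteq> 0" "\<forall>z\<in>I. c3 * z + c4 \<noteq> 0"
    and "smooth_on I W0" "smooth_on I W1"
    and "pushes (g13 c1 c2 c3 c4 c5 c6 W0 W1) (I \<times> UNIV) Q (u_comb a1 b1 k b2 a2 h)"
  shows "equivalent_to_u_or_P2R Q"
  unfolding equivalent_to_u_or_P2R_def
  by (rule exI[of _ I], rule exI[of _ c1], rule exI[of _ c2], rule exI[of _ c3], rule exI[of _ c4],
      rule exI[of _ c5], rule exI[of _ c6], rule exI[of _ W0], rule exI[of _ W1]) (use assms in blast)

lemma equivalent_to_u_or_P2R_P2RI:
  assumes "open I" "is_interval I" "I \<noteq> {}" "c1 * c4 - c2 * c3 \<noteq> 0" "\<forall>z\<in>I. c3 * z + c4 \<noteq> 0"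
    and "smooth_on I W0" "smooth_on I W1"
    and "smooth_on ((\<lambda>z. (c1 * z + c2) / (c3 * z + c4)) ` I) \<alpha>"
    and "pushes (g13 c1 c2 c3 c4 c5 c6 W0 W1) (I \<times> UNIV) Q (\<lambda>x. \<beta> *\<^sub>R vP2 x + vR \<alpha> x)"
  shows "equivalent_to_u_or_P2R Q"
  unfolding equivalent_to_u_or_P2R_def
  by (rule exI[of _ I], rule exI[of _ c1], rule exI[of _ c2], rule exI[of _ c3], rule exI[of _ c4],
      rule exI[of _ c5], rule exI[of _ c6], rule exI[of _ W0], rule exI[of _ W1]) (use assms in blast)

lemma equivalent_to_u_by_gauge:
  assumes "open I" "is_interval I" "I \<noteq> {}" "smooth_on I W0" "smooth_on I W1"
    and "pushes (g13 1 0 0 1 0 0 W0 W1) (I \<times> UNIV) Q (\<lambda>x. u_comb a1 b1 k b2 a2 h x + vR (\<lambda>_. 0) x)"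
  shows "equivalent_to_u_or_P2R Q"
  using assms by (intro equivalent_to_u_or_P2R_uI) (simp_all add: vR_zero)

lemma equivalent_to_u_if_z1_component_nonzero:
  assumes \<alpha>: "smooth_on UNIV \<alpha>" and \<sigma>: "smooth_on UNIV \<sigma>" and z0: "a1 + b1 * z0 + k * z0^2 \<noteq> 0"
  shows "equivalent_to_u_or_P2R (\<lambda>x. u_comb a1 b1 k b2 a2 h x + vR \<alpha> x + vZ \<sigma> x)"
proof -
  define \<tau> where "\<tau> z = a1 + b1 * z + k * z^2" for z
  define T where "T = {z. \<tau> z \<noteq> 0}"
  have T: "open T" "z0 \<in> T"
    using z0 by (auto simp: T_def \<tau>_def intro!: open_Collect_neq continuous_intros)
  have \<tau>_smooth: "smooth_on S \<tau>" if "open S" for S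
    unfolding \<tau>_def power2_eq_square
    by (intro smooth_on_add smooth_on_mult smooth_on_const smooth_on_id that)
  have "smooth_on T (\<lambda>z. (2 * b2 - b1) / \<tau> z)" "smooth_on T (\<lambda>z. - \<alpha> z / \<tau> z)"
    using T(1) by (auto simp: T_def intro!: smooth_on_divide smooth_on_const smooth_on_minus
        \<tau>_smooth smooth_on_subset[OF \<alpha>])
  then obtain a b W1 where ab: "a < z0" "z0 < b" "{a<..<b} \<subseteq> T" and W1: "smooth_on {a<..<b} W1"
    "\<And>z. z \<in> {a<..<b} \<Longrightarrow>
       (W1 has_real_derivative (2 * b2 - b1) / \<tau> z * W1 z + - \<alpha> z / \<tau> z) (at z)"
    using linear_ode_local_solution[OF T] by blast
  have J: "open {a<..<b}" "z0 \<in> {a<..<b}" "\<And>z. z \<in> {a<..<b} \<Longrightarrow> \<tau> z \<noteq> 0"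
    using ab by (auto simp: T_def)
  have "smooth_on {a<..<b} (\<lambda>z. (3 * b2 - b1 + k * z) / \<tau> z)"
    "smooth_on {a<..<b} (\<lambda>z. (- (a2 + h * z) * W1 z - \<sigma> z) / \<tau> z)"
    using J by (auto intro!: smooth_on_divide smooth_on_add smooth_on_diff smooth_on_mult
        smooth_on_minus smooth_on_const smooth_on_id \<tau>_smooth W1(1) smooth_on_subset[OF \<sigma>])
  then obtain a' b' W0 where ab': "a' < z0" "z0 < b'" "{a'<..<b'} \<subseteq> {a<..<b}"
    and W0: "smooth_on {a'<..<b'} W0"
    "\<And>z. z \<in> {a'<..<b'} \<Longrightarrow> (W0 has_real_derivative
       (3 * b2 - b1 + k * z) / \<tau> z * W0 z + (- (a2 + h * z) * W1 z - \<sigma> z) / \<tau> z) (at z)"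
    using linear_ode_local_solution[OF J(1,2)] by blast
  show ?thesis
  proof (rule equivalent_to_u_by_gauge)
    show "pushes (g13 1 0 0 1 0 0 W0 W1) ({a'<..<b'} \<times> UNIV)
      (\<lambda>x. u_comb a1 b1 k b2 a2 h x + vR \<alpha> x + vZ \<sigma> x)
      (\<lambda>x. u_comb a1 b1 k b2 a2 h x + vR (\<lambda>_. 0) x)"
    proof (rule gauge_pushes_a13)
      fix z assume "z \<in> {a'<..<b'}"
      then have "\<tau> z \<noteq> 0"
        using ab'(3) J(3) by auto
      then show "(a1 + b1 * z + k * z^2) * ((2 * b2 - b1) / \<tau> z * W1 z + - \<alpha> z / \<tau> z)
          = (2 * b2 - b1) * W1 z - \<alpha> z + 0"
        and "(a1 + b1 * z + k * z^2) * ((3 * b2 - b1 + k * z) / \<tau> z * W0 z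
            + (- (a2 + h * z) * W1 z - \<sigma> z) / \<tau> z)
          = (3 * b2 - b1 + k * z) * W0 z - (a2 + h * z) * W1 z - \<sigma> z"
        unfolding \<tau>_def[symmetric] by (simp_all add: field_simps)
    qed (use W1(2) W0(2) ab'(3) in auto)
    show "smooth_on {a'<..<b'} W1"
      using W1(1) ab'(3) by (rule smooth_on_subset)
  qed (use ab' W0(1) in auto)
qed

lemma equivalent_to_u_if_D2_coefficient_nonzero:
  assumes \<alpha>: "smooth_on UNIV \<alpha>" and \<sigma>: "smooth_on UNIV \<sigma>" and "b2 \<noteq> 0"
  shows "equivalent_to_u_or_P2R (\<lambda>x. u_comb 0 0 0 b2 a2 h x + vR \<alpha> x + vZ \<sigma> x)"
proof -
  define W1 where "W1 z = \<alpha> z / (2 * b2)" for z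
  define W0 where "W0 z = (\<sigma> z + (a2 + h * z) * W1 z) / (3 * b2)" for z
  have W1: "smooth_on UNIV W1" and W0: "smooth_on UNIV W0"
    unfolding W1_def W0_def using \<open>b2 \<noteq> 0\<close>
    by (auto intro!: smooth_on_divide smooth_on_add smooth_on_mult smooth_on_const smooth_on_id \<alpha> \<sigma>)
  show ?thesis
  proof (rule equivalent_to_u_by_gauge[OF open_UNIV is_interval_univ UNIV_not_empty W0 W1])
    show "pushes (g13 1 0 0 1 0 0 W0 W1) (UNIV \<times> UNIV)
      (\<lambda>x. u_comb 0 0 0 b2 a2 h x + vR \<alpha> x + vZ \<sigma> x) (\<lambda>x. u_comb 0 0 0 b2 a2 h x + vR (\<lambda>_. 0) x)"
      using \<open>b2 \<noteq> 0\<close> smooth_on_has_derivative[OF W0] smooth_on_has_derivative[OF W1]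
      by (intro gauge_pushes_a13) (auto simp: W0_def W1_def field_simps)
  qed
qed

lemma equivalent_to_P2R_if_P2_coefficient_nonzero:
  assumes \<alpha>: "smooth_on UNIV \<alpha>" and \<sigma>: "smooth_on UNIV \<sigma>" and "a2 \<noteq> 0"
  shows "equivalent_to_u_or_P2R (\<lambda>x. u_comb 0 0 0 0 a2 0 x + vR \<alpha> x + vZ \<sigma> x)"
proof -
  define W1 where "W1 z = - \<sigma> z / a2" for z
  have W1: "smooth_on UNIV W1"
    unfolding W1_def using \<open>a2 \<noteq> 0\<close> by (auto intro!: smooth_on_divide smooth_on_minus smooth_on_const \<sigma>)
  have push: "pushes (g13 1 0 0 1 0 0 (\<lambda>_. 0) W1) (UNIV \<times> UNIV)
      (\<lambda>x. u_comb 0 0 0 0 a2 0 x + vR \<alpha> x + vZ \<sigma> x) (\<lambda>x. u_comb 0 0 0 0 a2 0 x + vR \<alpha> x)"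
    using \<open>a2 \<noteq> 0\<close> smooth_on_has_derivative[OF W1]
    by (intro gauge_pushes_a13[where W0' = "\<lambda>_. 0"]) (auto simp: W1_def)
  have "(\<lambda>x. u_comb 0 0 0 0 a2 0 x + vR \<alpha> x) = (\<lambda>x. a2 *\<^sub>R vP2 x + vR \<alpha> x)"
    by (simp add: u_comb_P2)
  with push show ?thesis
    by (intro equivalent_to_u_or_P2R_P2RI[OF open_UNIV is_interval_univ UNIV_not_empty _ _
          smooth_on_const[OF open_UNIV] W1]) (simp_all add: \<alpha>)
qed

lemma equivalent_to_P2R_if_H_coefficient_nonzero:
  assumes \<alpha>: "smooth_on UNIV \<alpha>" and \<sigma>: "smooth_on UNIV \<sigma>" and "h \<noteq> 0"
  shows "equivalent_to_u_or_P2R (\<lambda>x. u_comb 0 0 0 0 a2 h x + vR \<alpha> x + vZ \<sigma> x)"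
proof -
  define I where "I = {z. h * z + a2 > 0}"
  have "open I"
    unfolding I_def by (intro open_Collect_less continuous_intros)
  moreover have "is_interval I"
  proof -
    have "I = {z. inner h z > - a2}"
      by (auto simp: I_def)
    then show ?thesis
      by (simp only: is_interval_convex_1 convex_halfspace_gt)
  qed
  moreover have "(1 - a2) / h \<in> I"
    using \<open>h \<noteq> 0\<close> by (simp add: I_def)
  ultimately have I: "open I" "is_interval I" "I \<noteq> {}"
    by auto
  define W1 where "W1 z = - \<sigma> z / (h * (h * z + a2)^2)" for z
  have W1: "smooth_on I W1"
    unfolding W1_def power2_eq_square using I(1) \<open>h \<noteq> 0\<close>
    by (auto simp: I_def intro!: smooth_on_divide smooth_on_add smooth_on_mult smooth_on_minus
        smooth_on_const smooth_on_id smooth_on_subset[OF \<sigma>])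
  define \<alpha>' where "\<alpha>' t = \<alpha> ((- 1 / t - a2) / h) / h" for t
  have "smooth_on {..<0} \<alpha>'"
    unfolding \<alpha>'_def using \<open>h \<noteq> 0\<close>
    by (auto intro!: smooth_on_divide smooth_on_diff smooth_on_minus smooth_on_compose[OF _ \<alpha>]
        smooth_on_const smooth_on_id)
  moreover have "(\<lambda>z. (0 * z + - 1) / (h * z + a2)) ` I \<subseteq> {..<0}"
    by (auto simp: I_def)
  ultimately have \<alpha>': "smooth_on ((\<lambda>z. (0 * z + - 1) / (h * z + a2)) ` I) \<alpha>'"
    by (rule smooth_on_subset)
  have push: "pushes (g13 0 (- 1) h a2 0 0 (\<lambda>_. 0) W1) (I \<times> UNIV)
      (\<lambda>x. u_comb 0 0 0 0 a2 h x + vR \<alpha> x + vZ \<sigma> x) (\<lambda>x. 1 *\<^sub>R vP2 x + vR \<alpha>' x)"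
    unfolding \<alpha>'_def using \<open>h \<noteq> 0\<close> smooth_on_has_derivative[OF W1]
    by (intro inversion_pushes_a13) (auto simp: I_def W1_def)
  have nonzero: "\<forall>z\<in>I. h * z + a2 \<noteq> 0"
    by (simp add: I_def)
  from equivalent_to_u_or_P2R_P2RI[OF I _ nonzero smooth_on_const[OF I(1)] W1 \<alpha>' push]
  show ?thesis
    using \<open>h \<noteq> 0\<close> by simp
qed

lemma a13_appropriate_cases:
  assumes "appropriate (\<lambda>x. u_comb a1 b1 k b2 a2 h x + vR \<alpha> x + vZ \<sigma> x)"
  obtains z0 where "a1 + b1 * z0 + k * z0^2 \<noteq> 0"
    | "a1 = 0" "b1 = 0" "k = 0" "b2 \<noteq> 0"
    | "a1 = 0" "b1 = 0" "k = 0" "b2 = 0" "h \<noteq> 0"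
    | "a1 = 0" "b1 = 0" "k = 0" "b2 = 0" "h = 0" "a2 \<noteq> 0"
proof (cases "\<exists>z0. a1 + b1 * z0 + k * z0^2 \<noteq> 0")
  case True
  then show ?thesis using that(1) by blast
next
  case False
  then have "a1 = 0" "a1 + b1 + k = 0" "a1 - b1 + k = 0"
    by (auto dest: spec[of _ 0] spec[of _ 1] spec[of _ "- 1"])
  then have zero: "a1 = 0" "b1 = 0" "k = 0"
    by linarith+
  obtain z1 z2 w where "fst (u_comb a1 b1 k b2 a2 h (z1, z2, w) + vR \<alpha> (z1, z2, w) + vZ \<sigma> (z1, z2, w)) \<noteq> 0
      \<or> fst (snd (u_comb a1 b1 k b2 a2 h (z1, z2, w) + vR \<alpha> (z1, z2, w) + vZ \<sigma> (z1, z2, w))) \<noteq> 0"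
    using assms unfolding appropriate_def by auto
  with zero have "b2 * z2 + a2 + h * z1 \<noteq> 0"
    by (simp add: u_comb_eval vR_def vZ_def)
  with zero show ?thesis
    using that(2-4) by (cases "b2 = 0"; cases "h = 0") auto
qed

theorem lemma13:
  fixes Q :: vfield
  assumes "in_a13 Q" and "appropriate Q"
  shows "\<exists>I c1 c2 c3 c4 c5 c6 W0 W1.
     open I \<and> is_interval I \<and> I \<noteq> {} \<and>
     c1 * c4 - c2 * c3 \<noteq> 0 \<and> (\<forall>z\<in>I. c3 * z + c4 \<noteq> 0) \<and>
     smooth_on I W0 \<and> smooth_on I W1 \<and>
     ((\<exists>a1 b1 k b2 a2 h.
         pushes (g13 c1 c2 c3 c4 c5 c6 W0 W1) (I \<times> UNIV) Q (u_comb a1 b1 k b2 a2 h))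
      \<or> (\<exists>\<beta> \<alpha>. smooth_on ((\<lambda>z. (c1 * z + c2) / (c3 * z + c4)) ` I) \<alpha> \<and>
         pushes (g13 c1 c2 c3 c4 c5 c6 W0 W1) (I \<times> UNIV) Q
           (\<lambda>x. \<beta> *\<^sub>R vP2 x + vR \<alpha> x)))"
proof -
  obtain a1 b1 k b2 a2 h \<alpha> \<sigma> where \<alpha>: "smooth_on UNIV \<alpha>" and \<sigma>: "smooth_on UNIV \<sigma>"
    and Q: "Q = (\<lambda>x. u_comb a1 b1 k b2 a2 h x + vR \<alpha> x + vZ \<sigma> x)"
    using assms(1) unfolding in_a13_def by blast
  have "equivalent_to_u_or_P2R (\<lambda>x. u_comb a1 b1 k b2 a2 h x + vR \<alpha> x + vZ \<sigma> x)"
    using assms(2) unfolding Q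
  proof (cases rule: a13_appropriate_cases)
    case 1
    then show ?thesis by (rule equivalent_to_u_if_z1_component_nonzero[OF \<alpha> \<sigma>])
  next
    case 2
    then show ?thesis using equivalent_to_u_if_D2_coefficient_nonzero[OF \<alpha> \<sigma>] by simp
  next
    case 3
    then show ?thesis using equivalent_to_P2R_if_H_coefficient_nonzero[OF \<alpha> \<sigma>] by simp
  next
    case 4
    then show ?thesis using equivalent_to_P2R_if_P2_coefficient_nonzero[OF \<alpha> \<sigma>] by simp
  qed
  then show ?thesis
    unfolding Q[symmetric] equivalent_to_u_or_P2R_def .
qed

end
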